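(* Let $N$ be a finite set with $|N|\ge2$, and let $m_1,m_2:\mathcal{P}(N)\to\mathbb{R}$ generate distinct extreme rays of the cone of standardized supermodular set functions. For $i=1,2$ let $o_i\in\mathbb{R}^{\Upsilon}$ be given by $o_i(a|B)=m_i(\{a\}\cup B)-m_i(B)$ and let $u_i$ be the common value of $\langle o_i,\eta_H\rangle$ over full graphs $H$ over $N$. Then the faces $F_i=\{\eta\in P_N:\langle o_i,\eta\rangle=u_i\}$ of $P_N$ ($i=1,2$) are inclusion-incomparable.
   Context: $\mathrm{DAG}(N)$ is the set of acyclic directed graphs over $N$; $\mathrm{pa}_G(a)$ is the parent set of $a$ in $G$. A full graph is an acyclic directed graph over $N$ in which every pair of distinct nodes is adjacent. $\Upsilon=\{(a|B): a\in N,\ \emptyset\neq B\subseteq N\setminus\{a\}\}$; $\eta_G\in\mathbb{R}^{\Upsilon}$ has $\eta_G(a|B)=1$ if $B=\mathrm{pa}_G(a)$, else $0$; $P_N=\mathrm{conv}\{\eta_G:G\in\mathrm{DAG}(N)\}$. A set function $m$ is standardized if $m(S)=0$ for $|S|\le1$, supermodular if $m(U)+m(V)\le m(U\cup V)+m(U\cap V)$ for all $U,V\subseteq N$. The standardized supermodular functions form a pointed polyhedral cone. (For a standardized supermodular $m$, the inequality $\langle o,\eta\rangle\le u$ so defined is valid on $P_N$ and tight at all full graphs.) *)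

theory Defs
  imports Complex_Main
begin

text \<open>Directed graphs over N are edge sets G \<subseteq> N \<times> N; (b,a) \<in> G means b \<rightarrow> a.\<close>

definition dags :: "'a set \<Rightarrow> ('a \<times> 'a) set set" where
  "dags N = {G. G \<subseteq> N \<times> N \<and> acyclic G}"

definition pa :: "('a \<times> 'a) set \<Rightarrow> 'a \<Rightarrow> 'a set" where
  "pa G a = {b. (b, a) \<in> G}"

definition full_graph :: "'a set \<Rightarrow> ('a \<times> 'a) set \<Rightarrow> bool" where
  "full_graph N G \<longleftrightarrow> G \<in> dags N \<and>
     (\<forall>a\<in>N. \<forall>b\<in>N. a \<noteq> b \<longrightarrow> (a, b) \<in> G \<or> (b, a) \<in> G)"

definition ups :: "'a set \<Rightarrow> ('a \<times> 'a set) set" where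
  "ups N = {(a, B). a \<in> N \<and> B \<noteq> {} \<and> B \<subseteq> N - {a}}"

text \<open>Vectors in R^Upsilon are functions on 'a \<times> 'a set (only values on ups N matter).\<close>
definition eta :: "'a set \<Rightarrow> ('a \<times> 'a) set \<Rightarrow> ('a \<times> 'a set) \<Rightarrow> real" where
  "eta N G p = (if p \<in> ups N \<and> snd p = pa G (fst p) then 1 else 0)"

definition ip :: "'a set \<Rightarrow> ('a \<times> 'a set \<Rightarrow> real) \<Rightarrow> ('a \<times> 'a set \<Rightarrow> real) \<Rightarrow> real" where
  "ip N o' x = (\<Sum>p\<in>ups N. o' p * x p)"

text \<open>P_N = conv {eta_G : G \<in> DAG(N)}, written out as the set of convex combinations
  of the (finitely many) points eta_G.\<close>
definition polytope_P :: "'a set \<Rightarrow> ('a \<times> 'a set \<Rightarrow> real) set" where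
  "polytope_P N = {x. \<exists>l :: ('a \<times> 'a) set \<Rightarrow> real.
      (\<forall>G\<in>dags N. 0 \<le> l G) \<and> (\<Sum>G\<in>dags N. l G) = 1 \<and>
      x = (\<lambda>p. \<Sum>G\<in>dags N. l G * eta N G p)}"

definition standardized :: "'a set \<Rightarrow> ('a set \<Rightarrow> real) \<Rightarrow> bool" where
  "standardized N m \<longleftrightarrow> (\<forall>S\<subseteq>N. card S \<le> 1 \<longrightarrow> m S = 0)"

definition supermodular :: "'a set \<Rightarrow> ('a set \<Rightarrow> real) \<Rightarrow> bool" where
  "supermodular N m \<longleftrightarrow> (\<forall>U\<subseteq>N. \<forall>V\<subseteq>N. m U + m V \<le> m (U \<union> V) + m (U \<inter> V))"

definition std_supermod :: "'a set \<Rightarrow> ('a set \<Rightarrow> real) \<Rightarrow> bool" where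
  "std_supermod N m \<longleftrightarrow> standardized N m \<and> supermodular N m"

definition extreme_ray :: "'a set \<Rightarrow> ('a set \<Rightarrow> real) \<Rightarrow> bool" where
  "extreme_ray N m \<longleftrightarrow> std_supermod N m \<and> (\<exists>S\<subseteq>N. m S \<noteq> 0) \<and>
     (\<forall>m1 m2. std_supermod N m1 \<and> std_supermod N m2 \<and> (\<forall>S\<subseteq>N. m S = m1 S + m2 S)
        \<longrightarrow> (\<exists>c\<ge>0. \<forall>S\<subseteq>N. m1 S = c * m S))"

definition same_ray :: "'a set \<Rightarrow> ('a set \<Rightarrow> real) \<Rightarrow> ('a set \<Rightarrow> real) \<Rightarrow> bool" where
  "same_ray N m1 m2 \<longleftrightarrow> (\<exists>c>0. \<forall>S\<subseteq>N. m1 S = c * m2 S)"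

definition obj :: "('a set \<Rightarrow> real) \<Rightarrow> ('a \<times> 'a set) \<Rightarrow> real" where
  "obj m p = m (insert (fst p) (snd p)) - m (snd p)"

definition face :: "'a set \<Rightarrow> ('a \<times> 'a set \<Rightarrow> real) \<Rightarrow> real \<Rightarrow> ('a \<times> 'a set \<Rightarrow> real) set" where
  "face N o' u = {x \<in> polytope_P N. ip N o' x = u}"

end

theory Submission imports Defs begin

text \<open>Suppose the face of m1 is contained in the face of m2. Supermodularity of a
  set function is equivalent to the nonnegativity of its elementary gaps
  m(aP) + m(B) - m(aB) - m(P) for B \<subseteq> P, a \<notin> P, and each such gap is the drop of the
  objective from a full graph H with pa_H(a) = P to the DAG obtained by deleting the
  arcs P - B \<rightarrow> a. So every vanishing gap of m1 yields a vertex of the face of m1,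
  hence of the face of m2, and the corresponding gap of m2 vanishes too. Then
  m1 - \<epsilon> m2 stays supermodular for small \<epsilon> > 0, and since m1 is extreme, m2 is a
  positive multiple of m1. By symmetry neither face contains the other.\<close>

definition supermod_gap :: "('a set \<Rightarrow> real) \<Rightarrow> 'a set \<times> 'a \<times> 'a set \<Rightarrow> real" where
  "supermod_gap m = (\<lambda>(P, a, B). m (insert a P) + m B - m (insert a B) - m P)"

definition elementary_triples :: "'a set \<Rightarrow> ('a set \<times> 'a \<times> 'a set) set" where
  "elementary_triples N = {(P, a, B). P \<subseteq> N \<and> a \<in> N \<and> a \<notin> P \<and> B \<subseteq> P}"

lemma finite_elementary_triples: "finite N \<Longrightarrow> finite (elementary_triples N)"
  by (rule finite_subset[of _ "Pow N \<times> N \<times> Pow N"]) (auto simp: elementary_triples_def)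

lemma supermod_gap_nonneg:
  assumes "supermodular N m" and "t \<in> elementary_triples N"
  shows "0 \<le> supermod_gap m t"
proof -
  obtain P a B where "t = (P, a, B)" "P \<subseteq> N" "a \<in> N" "a \<notin> P" "B \<subseteq> P"
    using assms(2) by (auto simp: elementary_triples_def)
  moreover from this have
    t: "P \<subseteq> N" "insert a B \<subseteq> N" "P \<union> insert a B = insert a P" "P \<inter> insert a B = B"
    by auto
  moreover have "m P + m (insert a B) \<le> m (insert a P) + m B"
    using assms(1) t unfolding supermodular_def by metis
  ultimately show ?thesis by (simp add: supermod_gap_def)
qed

lemma supermodular_if_gaps_nonneg:
  assumes fin: "finite N"
    and gap: "\<And>t. t \<in> elementary_triples N \<Longrightarrow> 0 \<le> supermod_gap m t"
  shows "supermodular N m"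
  unfolding supermodular_def
proof (intro allI impI)
  fix U V assume UN: "U \<subseteq> N" and "V \<subseteq> N"
  have "m U + m V \<le> m (U \<union> V) + m (U \<inter> V)"
    if "V \<subseteq> N" "card (V - U) = k" for k V
    using that
  proof (induction k arbitrary: V)
    case 0
    then have "V \<subseteq> U" using fin by (metis Diff_eq_empty_iff card_0_eq finite_Diff finite_subset)
    then show ?case by (simp add: Un_absorb2 Int_absorb1)
  next
    case (Suc k)
    then obtain a where a: "a \<in> V - U" by (metis card.empty ex_in_conv nat.distinct(1))
    define V' where "V' = V - {a}"
    have "card (V' - U) = k" "V' \<subseteq> N"
      using Suc.prems a by (auto simp: V'_def Diff_insert2[symmetric])
    then have IH: "m U + m V' \<le> m (U \<union> V') + m (U \<inter> V')" using Suc by blast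
    have "0 \<le> supermod_gap m (U \<union> V', a, V')"
      using UN Suc.prems a by (intro gap) (auto simp: elementary_triples_def V'_def)
    moreover have "insert a V' = V" "insert a (U \<union> V') = U \<union> V" "U \<inter> V' = U \<inter> V"
      using a by (auto simp: V'_def)
    ultimately show ?case using IH Suc.prems by (simp add: supermod_gap_def)
  qed
  then show "m U + m V \<le> m (U \<union> V) + m (U \<inter> V)" using \<open>V \<subseteq> N\<close> by blast
qed

lemma finite_domination_of_support:
  fixes f g :: "'b \<Rightarrow> real"
  assumes "finite T" and "\<And>t. t \<in> T \<Longrightarrow> 0 \<le> f t"
    and "\<And>t. t \<in> T \<Longrightarrow> f t = 0 \<Longrightarrow> g t = 0"
  shows "\<exists>\<epsilon>>0. \<forall>t\<in>T. \<epsilon> * g t \<le> f t"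
proof -
  define R where "R = (\<lambda>t. f t / g t) ` {t\<in>T. g t > 0}"
  define \<epsilon> where "\<epsilon> = Min (insert 1 R)"
  have "finite R" using assms(1) by (simp add: R_def)
  moreover have "\<forall>x\<in>R. x > 0"
    using assms(2,3) by (force simp: R_def intro: divide_pos_pos)
  ultimately have "\<epsilon> > 0" by (simp add: \<epsilon>_def)
  moreover have "\<epsilon> * g t \<le> f t" if "t \<in> T" for t
  proof (cases "g t > 0")
    case True
    then have "\<epsilon> \<le> f t / g t" unfolding \<epsilon>_def using \<open>finite R\<close> that by (simp add: R_def)
    then show ?thesis using True by (simp add: pos_le_divide_eq)
  next
    case False
    then show ?thesis using \<open>\<epsilon> > 0\<close> assms(2) that by (smt (verit) mult_nonneg_nonpos)
  qed
  ultimately show ?thesis by blast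
qed

lemma std_supermod_scale:
  assumes "std_supermod N m" and "0 \<le> c"
  shows "std_supermod N (\<lambda>S. c * m S)"
  using assms unfolding std_supermod_def standardized_def supermodular_def
  by (metis distrib_left mult_left_mono mult_zero_right)

lemma same_ray_if_gap_zeros_inherited:
  assumes fin: "finite N" and e1: "extreme_ray N m1" and e2: "extreme_ray N m2"
    and zeros: "\<And>t. t \<in> elementary_triples N \<Longrightarrow>
                  supermod_gap m1 t = 0 \<Longrightarrow> supermod_gap m2 t = 0"
  shows "same_ray N m1 m2"
proof -
  have s1: "standardized N m1" "supermodular N m1"
    and s2: "standardized N m2" "supermodular N m2"
    using e1 e2 by (auto simp: extreme_ray_def std_supermod_def)
  have "\<exists>\<epsilon>>0. \<forall>t\<in>elementary_triples N. \<epsilon> * supermod_gap m2 t \<le> supermod_gap m1 t"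
    by (rule finite_domination_of_support[OF finite_elementary_triples[OF fin]])
      (use supermod_gap_nonneg[OF s1(2)] zeros in auto)
  then obtain \<epsilon> :: real where "\<epsilon> > 0" and dom:
    "\<forall>t\<in>elementary_triples N. \<epsilon> * supermod_gap m2 t \<le> supermod_gap m1 t"
    by blast
  define m where "m S = m1 S - \<epsilon> * m2 S" for S
  have "std_supermod N m"
    unfolding std_supermod_def
  proof
    show "standardized N m" using s1(1) s2(1) by (simp add: standardized_def m_def)
    show "supermodular N m"
    proof (rule supermodular_if_gaps_nonneg[OF fin])
      fix t assume "t \<in> elementary_triples N"
      then have "\<epsilon> * supermod_gap m2 t \<le> supermod_gap m1 t" using dom by blast
      then show "0 \<le> supermod_gap m t"
        by (cases t) (simp add: supermod_gap_def m_def algebra_simps)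
    qed
  qed
  moreover have "std_supermod N (\<lambda>S. \<epsilon> * m2 S)"
    using std_supermod_scale[of N m2 \<epsilon>] s2 \<open>\<epsilon> > 0\<close> by (simp add: std_supermod_def)
  moreover have "\<forall>S\<subseteq>N. m1 S = \<epsilon> * m2 S + m S" by (simp add: m_def)
  ultimately have "\<exists>c\<ge>0. \<forall>S\<subseteq>N. \<epsilon> * m2 S = c * m1 S"
    using e1 unfolding extreme_ray_def by blast
  then obtain c where "c \<ge> 0" and c: "\<forall>S\<subseteq>N. \<epsilon> * m2 S = c * m1 S" by blast
  obtain S0 where "S0 \<subseteq> N" "m2 S0 \<noteq> 0" using e2 by (auto simp: extreme_ray_def)
  then have "c \<noteq> 0" using c \<open>\<epsilon> > 0\<close> by fastforce
  then have "\<forall>S\<subseteq>N. m1 S = (\<epsilon> / c) * m2 S" using c by (auto simp: field_simps)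
  moreover have "\<epsilon> / c > 0" using \<open>\<epsilon> > 0\<close> \<open>c \<ge> 0\<close> \<open>c \<noteq> 0\<close> by simp
  ultimately show ?thesis unfolding same_ray_def by blast
qed

lemma same_ray_sym: "same_ray N m1 m2 \<Longrightarrow> same_ray N m2 m1"
  unfolding same_ray_def by (metis divide_pos_pos nonzero_eq_divide_eq mult.commute
      divide_inverse order_less_irrefl)

lemma full_graph_of_rank:
  fixes r :: "'a \<Rightarrow> nat"
  assumes "inj_on r N"
  shows "full_graph N {(x, y). x \<in> N \<and> y \<in> N \<and> r x < r y}"
    (is "full_graph N ?H")
proof -
  have "acyclic ?H"
    by (rule acyclic_subset[OF wf_acyclic[OF wf_inv_image[OF wf_less_than, of r]]]) auto
  moreover have "r x \<noteq> r y" if "x \<in> N" "y \<in> N" "x \<noteq> y" for x y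
    using assms that by (meson inj_on_eq_iff)
  ultimately show ?thesis
    unfolding full_graph_def dags_def by (auto simp: nat_neq_iff)
qed

lemma full_graph_with_parents:
  assumes fin: "finite N" and "P \<subseteq> N" and "a \<in> N" and "a \<notin> P"
  shows "\<exists>H. full_graph N H \<and> pa H a = P"
proof -
  obtain f n where fN: "f ` N = {i::nat. i < n}" and inj: "inj_on f N"
    using finite_imp_inj_to_nat_seg[OF fin] by blast
  have flt: "x \<in> N \<Longrightarrow> f x < n" for x using fN by blast
  \<comment> \<open>rank P first, then a, then the rest; the offset f breaks ties within each block\<close>
  define cls where "cls x = (if x \<in> P then 0 else if x = a then 1 else (2::nat))" for x
  define r where "r x = cls x * n + f x" for x
  have "inj_on r N"
  proof (rule inj_onI)
    fix x y assume "x \<in> N" "y \<in> N" "r x = r y"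
    moreover have "r z mod n = f z" if "z \<in> N" for z
      using flt[OF that] by (simp add: r_def)
    ultimately show "x = y" using inj by (metis inj_on_eq_iff)
  qed
  moreover have "pa {(x, y). x \<in> N \<and> y \<in> N \<and> r x < r y} a = P"
    using assms flt[OF \<open>a \<in> N\<close>] flt[OF subsetD[OF \<open>P \<subseteq> N\<close>]]
    by (auto simp: pa_def r_def cls_def split: if_splits dest: flt intro: trans_less_add1)
  ultimately show ?thesis using full_graph_of_rank by blast
qed

lemma ip_obj_eta:
  assumes fin: "finite N" and G: "G \<in> dags N" and std: "standardized N m"
  shows "ip N (obj m) (eta N G) = (\<Sum>y\<in>N. obj m (y, pa G y))"
proof -
  have paN: "pa G y \<subseteq> N - {y}" for y
    using G by (auto simp: dags_def pa_def acyclic_def)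
  have finU: "finite (ups N)"
    by (rule finite_subset[of _ "N \<times> Pow N"]) (auto simp: ups_def fin)
  have "ip N (obj m) (eta N G) = (\<Sum>p\<in>ups N. if snd p = pa G (fst p) then obj m p else 0)"
    unfolding ip_def eta_def by (rule sum.cong) auto
  also have "\<dots> = (\<Sum>p\<in>{p\<in>ups N. snd p = pa G (fst p)}. obj m p)"
    using finU by (simp add: sum.inter_filter)
  also have "\<dots> = (\<Sum>y\<in>{y\<in>N. pa G y \<noteq> {}}. obj m (y, pa G y))"
    using paN by (intro sum.reindex_bij_witness[of _ "\<lambda>y. (y, pa G y)" fst])
      (auto simp: ups_def)
  also have "\<dots> = (\<Sum>y\<in>N. obj m (y, pa G y))"
    using std by (intro sum.mono_neutral_left[OF fin]) (auto simp: obj_def standardized_def)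
  finally show ?thesis .
qed

lemma ip_obj_eta_diff_one_node:
  assumes fin: "finite N" and std: "standardized N m" and "G \<in> dags N" "H \<in> dags N"
    and "a \<in> N" and same: "\<And>y. y \<noteq> a \<Longrightarrow> pa G y = pa H y"
  shows "ip N (obj m) (eta N H) - ip N (obj m) (eta N G)
           = obj m (a, pa H a) - obj m (a, pa G a)"
proof -
  have "(\<Sum>y\<in>N-{a}. obj m (y, pa G y)) = (\<Sum>y\<in>N-{a}. obj m (y, pa H y))"
    using same by (intro sum.cong) auto
  then show ?thesis
    using assms by (simp add: ip_obj_eta sum.remove[OF fin \<open>a \<in> N\<close>])
qed

lemma eta_in_polytope_P:
  assumes fin: "finite N" and G: "G \<in> dags N"
  shows "eta N G \<in> polytope_P N"
proof -
  have finD: "finite (dags N)"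
    by (rule finite_subset[of _ "Pow (N \<times> N)"]) (auto simp: dags_def fin)
  define l where "l G' = (if G' = G then 1 else (0::real))" for G'
  have "(\<Sum>G'\<in>dags N. l G' * eta N G' p) = (\<Sum>G'\<in>dags N. if G' = G then eta N G p else 0)" for p
    by (rule sum.cong) (auto simp: l_def)
  then have "eta N G = (\<lambda>p. \<Sum>G'\<in>dags N. l G' * eta N G' p)"
    using finD G by simp
  moreover have "(\<Sum>G'\<in>dags N. l G') = 1" using finD G by (simp add: l_def)
  moreover have "\<forall>G'\<in>dags N. 0 \<le> l G'" by (simp add: l_def)
  ultimately show ?thesis unfolding polytope_P_def by blast
qed

lemma gap_zero_transfer:
  assumes fin: "finite N" and "standardized N m1" "standardized N m2"
    and u1: "\<forall>H. full_graph N H \<longrightarrow> ip N (obj m1) (eta N H) = u1"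
    and u2: "\<forall>H. full_graph N H \<longrightarrow> ip N (obj m2) (eta N H) = u2"
    and sub: "face N (obj m1) u1 \<subseteq> face N (obj m2) u2"
    and t: "t \<in> elementary_triples N" and zero: "supermod_gap m1 t = 0"
  shows "supermod_gap m2 t = 0"
proof -
  obtain P a B where t_eq: "t = (P, a, B)" and tP: "P \<subseteq> N" "a \<in> N" "a \<notin> P" "B \<subseteq> P"
    using t by (auto simp: elementary_triples_def)
  obtain H where H: "full_graph N H" "pa H a = P" using full_graph_with_parents[OF fin tP(1-3)] by blast
  have HD: "H \<in> dags N" using H by (simp add: full_graph_def)
  define G where "G = H - {(x, a) | x. x \<in> P - B}"
  have GD: "G \<in> dags N" using HD by (auto simp: dags_def G_def intro: acyclic_subset)
  have "pa G a = B" using H tP by (auto simp: pa_def G_def)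
  moreover have "pa G y = pa H y" if "y \<noteq> a" for y using that by (auto simp: pa_def G_def)
  ultimately have drop: "ip N (obj m) (eta N H) - ip N (obj m) (eta N G) = supermod_gap m t"
    if "standardized N m" for m
    using ip_obj_eta_diff_one_node[OF fin that GD HD tP(2)] H(2) t_eq
    by (simp add: obj_def supermod_gap_def)
  have "eta N G \<in> face N (obj m1) u1"
    using drop[OF assms(2)] zero u1 H(1) eta_in_polytope_P[OF fin GD] by (simp add: face_def)
  then have "ip N (obj m2) (eta N G) = u2" using sub by (auto simp: face_def)
  then show ?thesis using drop[OF assms(3)] u2 H(1) by simp
qed

lemma same_ray_if_face_subset:
  assumes fin: "finite N" and e1: "extreme_ray N m1" and e2: "extreme_ray N m2"
    and "\<forall>H. full_graph N H \<longrightarrow> ip N (obj m1) (eta N H) = u1"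
    and "\<forall>H. full_graph N H \<longrightarrow> ip N (obj m2) (eta N H) = u2"
    and "face N (obj m1) u1 \<subseteq> face N (obj m2) u2"
  shows "same_ray N m1 m2"
proof -
  have "standardized N m1" "standardized N m2"
    using e1 e2 by (auto simp: extreme_ray_def std_supermod_def)
  then show ?thesis
    using same_ray_if_gap_zeros_inherited[OF fin e1 e2] gap_zero_transfer[OF fin] assms(4-6)
    by blast
qed

theorem lemma8:
  fixes N :: "'a set" and m1 m2 :: "'a set \<Rightarrow> real" and u1 u2 :: real
  assumes "finite N" and "card N \<ge> 2"
    and "extreme_ray N m1" and "extreme_ray N m2"
    and "\<not> same_ray N m1 m2"
    and "\<forall>H. full_graph N H \<longrightarrow> ip N (obj m1) (eta N H) = u1"
    and "\<forall>H. full_graph N H \<longrightarrow> ip N (obj m2) (eta N H) = u2"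
  shows "\<not> face N (obj m1) u1 \<subseteq> face N (obj m2) u2 \<and>
         \<not> face N (obj m2) u2 \<subseteq> face N (obj m1) u1"
  using same_ray_if_face_subset[OF assms(1,3,4,6,7)] same_ray_if_face_subset[OF assms(1,4,3,7,6)]
    assms(5) same_ray_sym by blast

end
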